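(* Let $X$ and $Y$ be real random variables with densities $p_X,p_Y$, where $p_Y(y)\le C<\infty$ for all $y\in\mathbb{R}$ and the law of $X$ is absolutely continuous with respect to the law of $Y$. Then for every $A>0$, with $\hat{\mathcal{A}}:=\{y:\,p_Y(y)\ge 1/A\}$, and every $s>1$, \[ \begin{aligned} \mathrm{KL}(X\|Y)\le\;&(1+|\ln C|)\big[\mathbb{P}(Y\in\hat{\mathcal{A}}^c)+\|p_X-p_Y\|_1\big]\\ &+\big(\mathbb{E}_X|\ln p_Y(X)|^s\big)^{1/s}\big[\mathbb{P}(Y\in\hat{\mathcal{A}}^c)+\|p_X-p_Y\|_1\big]^{1-1/s}\\ &+(1+A)\|p_X-p_Y\|_2^2 . \end{aligned} \]
   Context: $\mathrm{KL}(X\|Y)=\int p_X\ln(p_X/p_Y)$ is the Kullback–Leibler divergence; $\|\cdot\|_q$ is the $L^q(\mathbb{R})$ norm with respect to Lebesgue measure; $\mathbb{E}_X|\ln p_Y(X)|^s=\int p_X|\ln p_Y|^s$. *)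

theory Defs
  imports "HOL-Analysis.Analysis"
begin

definition KL_dens :: "(real \<Rightarrow> real) \<Rightarrow> (real \<Rightarrow> real) \<Rightarrow> ereal" where
  "KL_dens pX pY =
     enn2ereal (\<integral>\<^sup>+ x. ennreal (pX x * ln (pX x / pY x)) \<partial>lborel)
   - enn2ereal (\<integral>\<^sup>+ x. ennreal (- (pX x * ln (pX x / pY x))) \<partial>lborel)"

definition enn_powr :: "ennreal \<Rightarrow> real \<Rightarrow> ennreal" where
  "enn_powr e r = (if e = \<infinity> then \<infinity> else ennreal (enn2real e powr r))"

definition is_density :: "(real \<Rightarrow> real) \<Rightarrow> bool" where
  "is_density p \<longleftrightarrow> p \<in> borel_measurable borel \<and> (\<forall>x. 0 \<le> p x)
     \<and> (\<integral>\<^sup>+ x. ennreal (p x) \<partial>lborel) = 1"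

end

theory Submission
  imports Defs
begin

(* Write f = pX and g = pY. From ln t <= t - 1, pointwise f ln(f/g) <= (f - g) + (f - g)^2/g, which is
   at most (f - g) + A (f - g)^2 where g >= 1/A; where g < 1/A one pays g + f |ln g| + (1 + A) (f - g)^2
   instead. Integrating, the terms f - g cancel, the g-term gives P(Y in {g < 1/A}), and Hoelder's
   inequality bounds the integral of f |ln g| over {g < 1/A} by (E_X |ln g(X)|^s)^(1/s) times
   (integral of f over {g < 1/A})^(1 - 1/s), that mass being at most P(Y in {g < 1/A}) + ||f - g||_1. *)

lemma mult_ln_div_le_chi2:
  fixes f g :: real
  assumes "0 \<le> f" and "0 < g"
  shows "f * ln (f / g) \<le> f - g + (f - g)\<^sup>2 / g"
proof -
  have "f * ln (f / g) \<le> f * (f / g - 1)"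
    using assms by (cases "f = 0") (auto intro!: mult_left_mono ln_le_minus_one)
  also have "\<dots> = f - g + (f - g)\<^sup>2 / g"
    using assms by (simp add: field_simps power2_eq_square)
  finally show ?thesis .
qed

lemma mult_ln_div_le_of_le_1:
  fixes f g :: real
  assumes "0 \<le> f" and "0 \<le> g" and "g \<le> 1"
  shows "f * ln (f / g) \<le> f + f * \<bar>ln g\<bar> + (f - g)\<^sup>2"
proof (cases "f = 0 \<or> g = 0")
  case False
  then have f: "0 < f" and g: "0 < g" using assms by auto
  have "f * ln (f / g) = f * ln f + f * (- ln g)"
    using f g by (simp add: ln_div algebra_simps)
  also have "\<dots> \<le> f * (f - 1) + f * \<bar>ln g\<bar>"
    using f by (intro add_mono mult_left_mono ln_le_minus_one) auto
  also have "f * (f - 1) \<le> f + (f - g)\<^sup>2"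
  proof -
    have "f + (f - g)\<^sup>2 - f * (f - 1) = 2 * (f - f * g) + g\<^sup>2"
      by (simp add: power2_eq_square algebra_simps)
    moreover have "f * g \<le> f" using mult_left_mono[OF \<open>g \<le> 1\<close> \<open>0 \<le> f\<close>] by simp
    then have "0 \<le> 2 * (f - f * g) + g\<^sup>2" by simp
    ultimately show ?thesis by linarith
  qed
  finally show ?thesis by simp
qed (use assms in auto)

lemma mult_ln_div_le:
  fixes f g A :: real
  assumes f: "0 \<le> f" and g: "0 \<le> g" and A: "0 < A"
  shows "f * ln (f / g) \<le>
    f - g + (if g < 1 / A then g + f * \<bar>ln g\<bar> else 0) + (1 + A) * (f - g)\<^sup>2"
proof -
  have chi2_le: "f * ln (f / g) \<le> f - g + c * (f - g)\<^sup>2" if "0 < g" "1 / g \<le> c" for c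
  proof -
    have "(f - g)\<^sup>2 / g \<le> c * (f - g)\<^sup>2"
      using mult_left_mono[OF \<open>1 / g \<le> c\<close>, of "(f - g)\<^sup>2"] by (simp add: mult.commute)
    then show ?thesis using mult_ln_div_le_chi2[OF f \<open>0 < g\<close>] by linarith
  qed
  have nonneg: "0 \<le> g + f * \<bar>ln g\<bar>" "0 \<le> (f - g)\<^sup>2" "0 \<le> A * (f - g)\<^sup>2"
    using f g A by auto
  have split_sq: "(1 + A) * (f - g)\<^sup>2 = (f - g)\<^sup>2 + A * (f - g)\<^sup>2"
    by (simp add: distrib_right)
  consider "1 / A \<le> g" | "g < 1 / A" "1 < g" | "g < 1 / A" "g \<le> 1" by linarith
  then show ?thesis
  proof cases
    case 1
    moreover have "0 < 1 / A" using A by simp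
    ultimately have "0 < g" by linarith
    moreover have "1 / g \<le> A" using 1 A \<open>0 < g\<close> by (simp add: field_simps)
    ultimately have "f * ln (f / g) \<le> f - g + A * (f - g)\<^sup>2" by (rule chi2_le)
    moreover have "(if g < 1 / A then g + f * \<bar>ln g\<bar> else 0) = 0" using 1 by simp
    ultimately show ?thesis using nonneg split_sq by linarith
  next
    case 2
    then have "f * ln (f / g) \<le> f - g + 1 * (f - g)\<^sup>2" by (intro chi2_le) auto
    moreover have "(if g < 1 / A then g + f * \<bar>ln g\<bar> else 0) = g + f * \<bar>ln g\<bar>"
      using 2 by simp
    ultimately show ?thesis using nonneg split_sq by linarith
  next
    case 3
    then have "(if g < 1 / A then g + f * \<bar>ln g\<bar> else 0) = g + f * \<bar>ln g\<bar>" by simp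
    then show ?thesis using mult_ln_div_le_of_le_1[OF f g \<open>g \<le> 1\<close>] nonneg split_sq by linarith
  qed
qed

lemma minus_mult_ln_div_le:
  fixes f g :: real
  assumes "0 \<le> f" and "0 \<le> g"
  shows "- (f * ln (f / g)) \<le> g"
proof (cases "f = 0 \<or> g = 0")
  case False
  then have f: "0 < f" and g: "0 < g" using assms by auto
  have "- (f * ln (f / g)) = f * ln (g / f)" using f g by (simp add: ln_div algebra_simps)
  also have "\<dots> \<le> f * (g / f - 1)" using f g by (intro mult_left_mono ln_le_minus_one) auto
  also have "\<dots> = g - f" using f by (simp add: field_simps)
  finally show ?thesis using f by simp
qed (use assms in auto)

lemma KL_dens_le_nn_integral:
  assumes "is_density f" and "is_density g"
    and [measurable]: "w \<in> borel_measurable borel" and w_nonneg: "\<And>x. 0 \<le> w x"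
    and le: "\<And>x. f x * ln (f x / g x) \<le> f x - g x + w x"
  shows "KL_dens f g \<le> enn2ereal (\<integral>\<^sup>+ x. w x \<partial>lborel)"
proof -
  have [measurable]: "f \<in> borel_measurable borel" "g \<in> borel_measurable borel"
    and nonneg: "\<And>x. 0 \<le> f x" "\<And>x. 0 \<le> g x"
    and mass: "(\<integral>\<^sup>+ x. f x \<partial>lborel) = 1" "(\<integral>\<^sup>+ x. g x \<partial>lborel) = 1"
    using assms(1,2) unfolding is_density_def by auto
  define h where "h x = f x * ln (f x / g x)" for x
  have [measurable]: "h \<in> borel_measurable borel" unfolding h_def by measurable
  define Pos where "Pos = (\<integral>\<^sup>+ x. h x \<partial>lborel)"
  define Neg where "Neg = (\<integral>\<^sup>+ x. - h x \<partial>lborel)"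
  define W where "W = (\<integral>\<^sup>+ x. w x \<partial>lborel)"
  have pointwise: "ennreal (h x) + g x \<le> ennreal (- h x) + f x + w x" for x
  proof -
    have "max 0 (h x) + g x \<le> max 0 (- h x) + f x + w x"
      using le[of x] unfolding h_def by linarith
    then have "ennreal (max 0 (h x) + g x) \<le> ennreal (max 0 (- h x) + f x + w x)"
      by (rule ennreal_leI)
    then show ?thesis using nonneg w_nonneg by (simp add: ennreal_max_0)
  qed
  have "Pos + 1 = (\<integral>\<^sup>+ x. ennreal (h x) + g x \<partial>lborel)"
    unfolding Pos_def by (simp add: nn_integral_add mass)
  also have "\<dots> \<le> (\<integral>\<^sup>+ x. ennreal (- h x) + f x + w x \<partial>lborel)"
    by (intro nn_integral_mono pointwise)
  also have "\<dots> = Neg + 1 + W"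
    unfolding Neg_def W_def by (simp add: nn_integral_add mass)
  finally have "1 + Pos \<le> 1 + (Neg + W)" by (simp add: ac_simps)
  then have "Pos \<le> Neg + W" by (simp add: ennreal_add_left_cancel_le)
  then have "enn2ereal Pos \<le> enn2ereal Neg + enn2ereal W"
    by (simp add: less_eq_ennreal.rep_eq plus_ennreal.rep_eq)
  moreover have "Neg \<le> 1"
  proof -
    have "Neg \<le> (\<integral>\<^sup>+ x. g x \<partial>lborel)"
      unfolding Neg_def h_def by (intro nn_integral_mono ennreal_leI minus_mult_ln_div_le nonneg)
    then show ?thesis using mass by simp
  qed
  then have "\<bar>enn2ereal Neg\<bar> \<noteq> \<infinity>"
    by (metis abs_ereal_ge0 enn2ereal_eq_top_iff enn2ereal_nonneg ennreal_one_neq_top neq_top_trans)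
  ultimately show ?thesis
    unfolding KL_dens_def Pos_def Neg_def W_def h_def by (simp add: ereal_minus_le add.commute)
qed

lemma Youngs_inequality_scaled:
  fixes t c s :: real
  assumes t: "0 \<le> t" and c: "0 < c" and s: "1 < s"
  shows "t \<le> c powr (1 - s) * t powr s / s + c * (1 - 1 / s)"
proof -
  define q where "q = s / (s - 1)"
  have q: "1 < q" "1 / s + 1 / q = 1" using s by (auto simp: q_def field_simps)
  have "t = (t * c powr ((1 - s) / s)) * c powr ((s - 1) / s)"
    using c s by (simp add: powr_add[symmetric] field_simps)
  also have "\<dots> \<le> (t * c powr ((1 - s) / s)) powr s / s + (c powr ((s - 1) / s)) powr q / q"
    using Youngs_inequality[OF s q] t c by simp
  also have "(t * c powr ((1 - s) / s)) powr s = t powr s * c powr (1 - s)"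
    using t c s by (simp add: powr_mult powr_powr)
  also have "(c powr ((s - 1) / s)) powr q = c" using s c by (simp add: powr_powr q_def)
  also have "c / q = c * (1 - 1 / s)" using s by (simp add: q_def field_simps)
  finally show ?thesis by (simp add: algebra_simps)
qed

lemma enn_powr_mono:
  assumes "a \<le> b" and "0 \<le> r"
  shows "enn_powr a r \<le> enn_powr b r"
  using assms by (cases "b = \<infinity>")
    (auto simp: enn_powr_def top_unique less_top intro!: ennreal_leI powr_mono2 enn2real_mono)

lemma nn_integral_Holder_weighted:
  fixes w u :: "'a \<Rightarrow> real" and s D :: real
  assumes [measurable]: "w \<in> borel_measurable M" "u \<in> borel_measurable M"
    and w: "\<And>x. 0 \<le> w x" and u: "\<And>x. 0 \<le> u x" and s: "1 < s"
    and D: "0 \<le> D" and mass: "(\<integral>\<^sup>+ x. w x \<partial>M) \<le> ennreal D"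
  shows "(\<integral>\<^sup>+ x. ennreal (w x * u x) \<partial>M)
    \<le> enn_powr (\<integral>\<^sup>+ x. ennreal (w x * u x powr s) \<partial>M) (1 / s) * ennreal (D powr (1 - 1 / s))"
proof -
  define P where "P = (\<integral>\<^sup>+ x. ennreal (w x * u x powr s) \<partial>M)"
  have Young: "(\<integral>\<^sup>+ x. ennreal (w x * u x) \<partial>M) \<le> ennreal (c powr (1 - s) / s) * P + ennreal (c * (1 - 1 / s) * D)"
    if c: "0 < c" for c
  proof -
    define a b where "a = c powr (1 - s) / s" and "b = c * (1 - 1 / s)"
    have coeff: "0 \<le> a" "0 \<le> b" using c s by (auto simp: a_def b_def)
    have "(\<integral>\<^sup>+ x. ennreal (w x * u x) \<partial>M)
        \<le> (\<integral>\<^sup>+ x. ennreal a * ennreal (w x * u x powr s) + ennreal b * ennreal (w x) \<partial>M)"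
    proof (intro nn_integral_mono)
      fix x
      have "w x * u x \<le> w x * (c powr (1 - s) * u x powr s / s + c * (1 - 1 / s))"
        by (intro mult_left_mono Youngs_inequality_scaled u w c s)
      then have "ennreal (w x * u x) \<le> ennreal (a * (w x * u x powr s) + b * w x)"
        by (intro ennreal_leI) (simp add: a_def b_def algebra_simps)
      also have "\<dots> = ennreal a * ennreal (w x * u x powr s) + ennreal b * ennreal (w x)"
        using coeff w[of x] by (simp add: ennreal_mult mult_nonneg_nonneg)
      finally show "ennreal (w x * u x) \<le> \<dots>" .
    qed
    also have "\<dots> = ennreal a * P + ennreal b * (\<integral>\<^sup>+ x. w x \<partial>M)"
      unfolding P_def by (simp add: nn_integral_add nn_integral_cmult)
    also have "\<dots> \<le> ennreal a * P + ennreal (b * D)"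
      using mass coeff D by (simp add: ennreal_mult mult_left_mono)
    finally show ?thesis unfolding a_def b_def .
  qed
  have vanish: "(\<integral>\<^sup>+ x. ennreal (w x * u x) \<partial>M) = 0" if "D = 0 \<or> P = 0"
  proof -
    have "AE x in M. w x = 0 \<or> u x = 0"
    proof (cases "D = 0")
      case True
      then have "(\<integral>\<^sup>+ x. w x \<partial>M) = 0" using mass by simp
      then show ?thesis using w by (auto simp: nn_integral_0_iff_AE elim!: eventually_mono)
    next
      case False
      then have "P = 0" using that by simp
      then show ?thesis using w u unfolding P_def by (simp add: nn_integral_0_iff_AE)
    qed
    then show ?thesis using w u by (simp add: nn_integral_0_iff_AE)
  qed
  consider "D = 0 \<or> P = 0" | "0 < D" "P = \<infinity>" | p where "0 < D" "P = ennreal p" "0 < p"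
    using D by (cases P) (auto simp: less_le)
  then show ?thesis
  proof cases
    case 1
    then show ?thesis using vanish by simp
  next
    case 2
    then show ?thesis unfolding P_def by (simp add: enn_powr_def)
  next
    case 3
    \<comment> \<open>the scale minimising the Young bound: it makes both of its terms proportional to c D\<close>
    define c where "c = (p / D) powr (1 / s)"
    have "0 < c" using 3 by (simp add: c_def)
    have "c powr s = p / D" using 3 s by (simp add: c_def powr_powr)
    then have "c powr (1 - s) * p = c * D"
      using 3 \<open>0 < c\<close> by (simp add: powr_diff field_simps)
    then have "c powr (1 - s) / s * p + c * (1 - 1 / s) * D = c * D"
      using s by (simp add: field_simps)
    also have "c * D = p powr (1 / s) * D powr (1 - 1 / s)"
      using 3 by (simp add: c_def powr_divide powr_diff)
    finally have optimum: "c powr (1 - s) / s * p + c * (1 - 1 / s) * D = p powr (1 / s) * D powr (1 - 1 / s)" .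
    have "(\<integral>\<^sup>+ x. ennreal (w x * u x) \<partial>M) \<le> ennreal (c powr (1 - s) / s) * P + ennreal (c * (1 - 1 / s) * D)"
      using \<open>0 < c\<close> by (rule Young)
    also have "\<dots> = ennreal (c powr (1 - s) / s * p + c * (1 - 1 / s) * D)"
      using 3 s \<open>0 < c\<close>
      by (simp add: ennreal_mult[symmetric] ennreal_plus[symmetric] del: ennreal_plus)
    also have "\<dots> = enn_powr P (1 / s) * ennreal (D powr (1 - 1 / s))"
      unfolding optimum using 3 by (simp add: enn_powr_def ennreal_mult)
    finally show ?thesis unfolding P_def .
  qed
qed

lemma finite_measure_density_is_density:
  assumes "is_density g"
  shows "finite_measure (density lborel (\<lambda>y. ennreal (g y)))"
  using assms unfolding is_density_def by (intro finite_measureI) (simp add: emeasure_density)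

lemma nn_integral_indicator_le_emeasure_plus_L1:
  assumes "is_density f" and "is_density g" and [measurable]: "B \<in> sets borel"
  shows "(\<integral>\<^sup>+ x. ennreal (indicator B x * f x) \<partial>lborel)
    \<le> emeasure (density lborel (\<lambda>y. ennreal (g y))) B + ennreal (\<integral>x. \<bar>f x - g x\<bar> \<partial>lborel)"
proof -
  have [measurable]: "f \<in> borel_measurable borel" "g \<in> borel_measurable borel"
    and nonneg: "\<And>x. 0 \<le> f x" "\<And>x. 0 \<le> g x"
    and mass: "(\<integral>\<^sup>+ x. f x \<partial>lborel) = 1" "(\<integral>\<^sup>+ x. g x \<partial>lborel) = 1"
    using assms(1,2) unfolding is_density_def by auto
  have "integrable lborel f" "integrable lborel g"
    using nonneg mass by (auto intro!: integrableI_nonneg)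
  then have L1: "(\<integral>\<^sup>+ x. \<bar>f x - g x\<bar> \<partial>lborel) = ennreal (\<integral>x. \<bar>f x - g x\<bar> \<partial>lborel)"
    by (intro nn_integral_eq_integral) auto
  have "(\<integral>\<^sup>+ x. ennreal (indicator B x * f x) \<partial>lborel)
      \<le> (\<integral>\<^sup>+ x. ennreal (g x) * indicator B x + \<bar>f x - g x\<bar> \<partial>lborel)"
    using nonneg
    by (intro nn_integral_mono)
      (auto simp: indicator_def ennreal_plus[symmetric] simp del: ennreal_plus intro!: ennreal_leI)
  also have "\<dots> = emeasure (density lborel (\<lambda>y. ennreal (g y))) B + ennreal (\<integral>x. \<bar>f x - g x\<bar> \<partial>lborel)"
    by (simp add: nn_integral_add emeasure_density L1)
  finally show ?thesis .
qed

lemma KL_dens_le_tail_split: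
  assumes "is_density f" and "is_density g" and "0 < A"
  defines "B \<equiv> {y. g y < 1 / A}"
  shows "KL_dens f g \<le> enn2ereal (emeasure (density lborel (\<lambda>y. ennreal (g y))) B
    + (\<integral>\<^sup>+ x. ennreal (indicator B x * (f x * \<bar>ln (g x)\<bar>)) \<partial>lborel)
    + ennreal (1 + A) * (\<integral>\<^sup>+ x. ennreal ((f x - g x)\<^sup>2) \<partial>lborel))"
proof -
  have [measurable]: "f \<in> borel_measurable borel" "g \<in> borel_measurable borel"
    and nonneg: "\<And>x. 0 \<le> f x" "\<And>x. 0 \<le> g x"
    using assms(1,2) unfolding is_density_def by auto
  have [measurable]: "B \<in> sets borel" unfolding B_def by measurable
  define w where
    "w x = indicator B x * g x + indicator B x * (f x * \<bar>ln (g x)\<bar>) + (1 + A) * (f x - g x)\<^sup>2"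
    for x
  have w_nonneg: "0 \<le> w x" for x
    using nonneg \<open>0 < A\<close> by (simp add: w_def indicator_def)
  have "KL_dens f g \<le> enn2ereal (\<integral>\<^sup>+ x. w x \<partial>lborel)"
  proof (rule KL_dens_le_nn_integral[OF assms(1,2)])
    show "w \<in> borel_measurable borel" unfolding w_def by measurable
    show "f x * ln (f x / g x) \<le> f x - g x + w x" for x
      using mult_ln_div_le[OF nonneg(1,2) \<open>0 < A\<close>, of x x]
      by (cases "g x < 1 / A") (simp_all add: w_def B_def)
  qed (fact w_nonneg)
  also have "(\<integral>\<^sup>+ x. w x \<partial>lborel) = emeasure (density lborel (\<lambda>y. ennreal (g y))) B
    + (\<integral>\<^sup>+ x. ennreal (indicator B x * (f x * \<bar>ln (g x)\<bar>)) \<partial>lborel)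
    + ennreal (1 + A) * (\<integral>\<^sup>+ x. ennreal ((f x - g x)\<^sup>2) \<partial>lborel)"
    using nonneg \<open>0 < A\<close> unfolding w_def
    by (simp add: nn_integral_add nn_integral_cmult emeasure_density ennreal_mult ennreal_indicator
        mult.commute)
  finally show ?thesis .
qed

lemma tail_log_Holder:
  assumes "is_density f" and "is_density g" and [measurable]: "B \<in> sets borel" and "1 < s"
  shows "(\<integral>\<^sup>+ x. ennreal (indicator B x * (f x * \<bar>ln (g x)\<bar>)) \<partial>lborel)
    \<le> enn_powr (\<integral>\<^sup>+ x. ennreal (f x * \<bar>ln (g x)\<bar> powr s) \<partial>lborel) (1 / s)
      * ennreal ((measure (density lborel (\<lambda>y. ennreal (g y))) B
          + (\<integral>x. \<bar>f x - g x\<bar> \<partial>lborel)) powr (1 - 1 / s))"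
proof -
  have [measurable]: "f \<in> borel_measurable borel" "g \<in> borel_measurable borel"
    and nonneg: "\<And>x. 0 \<le> f x"
    using assms(1,2) unfolding is_density_def by auto
  interpret finite_measure "density lborel (\<lambda>y. ennreal (g y))"
    by (rule finite_measure_density_is_density[OF assms(2)])
  have "(\<integral>\<^sup>+ x. ennreal (indicator B x * (f x * \<bar>ln (g x)\<bar>)) \<partial>lborel)
      = (\<integral>\<^sup>+ x. ennreal (indicator B x * f x * \<bar>ln (g x)\<bar>) \<partial>lborel)"
    by (simp add: mult.assoc)
  also have "\<dots> \<le> enn_powr (\<integral>\<^sup>+ x. ennreal (indicator B x * f x * \<bar>ln (g x)\<bar> powr s) \<partial>lborel) (1 / s)
      * ennreal ((measure (density lborel (\<lambda>y. ennreal (g y))) B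
          + (\<integral>x. \<bar>f x - g x\<bar> \<partial>lborel)) powr (1 - 1 / s))"
    using nonneg nn_integral_indicator_le_emeasure_plus_L1[OF assms(1-3)] \<open>1 < s\<close>
    by (intro nn_integral_Holder_weighted) (auto simp: emeasure_eq_measure)
  also have "\<dots> \<le> enn_powr (\<integral>\<^sup>+ x. ennreal (f x * \<bar>ln (g x)\<bar> powr s) \<partial>lborel) (1 / s)
      * ennreal ((measure (density lborel (\<lambda>y. ennreal (g y))) B
          + (\<integral>x. \<bar>f x - g x\<bar> \<partial>lborel)) powr (1 - 1 / s))"
    using nonneg \<open>1 < s\<close>
    by (intro mult_right_mono enn_powr_mono nn_integral_mono ennreal_leI) (auto simp: indicator_def)
  finally show ?thesis .
qed

theorem theorem2p2:
  fixes pX pY :: "real \<Rightarrow> real" and C A s :: real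
  assumes "is_density pX" and "is_density pY"
    and "\<forall>y. pY y \<le> C"
    and "absolutely_continuous (density lborel (\<lambda>y. ennreal (pY y)))
                                (density lborel (\<lambda>x. ennreal (pX x)))"
    and "A > 0" and "s > 1"
  shows "KL_dens pX pY \<le>
      ereal ((1 + \<bar>ln C\<bar>) *
        (measure (density lborel (\<lambda>y. ennreal (pY y))) {y. \<not> (pY y \<ge> 1 / A)}
         + (\<integral>x. \<bar>pX x - pY x\<bar> \<partial>lborel)))
    + enn2ereal (enn_powr (\<integral>\<^sup>+ x. ennreal (pX x * \<bar>ln (pY x)\<bar> powr s) \<partial>lborel) (1 / s))
      * ereal ((measure (density lborel (\<lambda>y. ennreal (pY y))) {y. \<not> (pY y \<ge> 1 / A)}
         + (\<integral>x. \<bar>pX x - pY x\<bar> \<partial>lborel)) powr (1 - 1 / s))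
    + ereal (1 + A) * enn2ereal (\<integral>\<^sup>+ x. ennreal ((pX x - pY x)\<^sup>2) \<partial>lborel)"
proof -
  have [measurable]: "pY \<in> borel_measurable borel"
    using assms(2) unfolding is_density_def by auto
  define B where "B = {y. pY y < 1 / A}"
  have [measurable]: "B \<in> sets borel" unfolding B_def by measurable
  define \<mu> where "\<mu> = density lborel (\<lambda>y. ennreal (pY y))"
  interpret finite_measure \<mu> unfolding \<mu>_def by (rule finite_measure_density_is_density[OF assms(2)])
  define D where "D = measure \<mu> B + (\<integral>x. \<bar>pX x - pY x\<bar> \<partial>lborel)"
  define P where "P = (\<integral>\<^sup>+ x. ennreal (pX x * \<bar>ln (pY x)\<bar> powr s) \<partial>lborel)"
  define Q where "Q = (\<integral>\<^sup>+ x. ennreal ((pX x - pY x)\<^sup>2) \<partial>lborel)"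
  have "KL_dens pX pY \<le> enn2ereal (ennreal (measure \<mu> B)
      + enn_powr P (1 / s) * ennreal (D powr (1 - 1 / s)) + ennreal (1 + A) * Q)"
    using KL_dens_le_tail_split[OF assms(1,2) \<open>A > 0\<close>] tail_log_Holder[OF assms(1,2) _ \<open>s > 1\<close>, of B]
    unfolding B_def[symmetric] \<mu>_def[symmetric] D_def[symmetric] P_def[symmetric] Q_def[symmetric]
      emeasure_eq_measure
    by (meson add_mono order_refl less_eq_ennreal.rep_eq order_trans \<open>B \<in> sets borel\<close>)
  also have "\<dots> \<le> ereal ((1 + \<bar>ln C\<bar>) * D)
      + enn2ereal (enn_powr P (1 / s)) * ereal (D powr (1 - 1 / s)) + ereal (1 + A) * enn2ereal Q"
  proof -
    have "0 \<le> D" unfolding D_def by simp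
    have "measure \<mu> B \<le> D" unfolding D_def by simp
    also have "D \<le> (1 + \<bar>ln C\<bar>) * D" using mult_right_mono[OF _ \<open>0 \<le> D\<close>, of 1] by simp
    finally have "measure \<mu> B \<le> (1 + \<bar>ln C\<bar>) * D" .
    then show ?thesis
      using \<open>A > 0\<close>
      by (simp add: plus_ennreal.rep_eq times_ennreal.rep_eq add_right_mono del: ennreal_plus)
  qed
  finally show ?thesis
    unfolding D_def P_def Q_def \<mu>_def B_def by (simp add: not_le)
qed

end
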